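(* Let $q$ be an odd prime power, $\mathbb F_q$ the finite field of order $q$, $d$ a positive integer, and $A\subset \mathbb F_q^d$. Let $\mathcal{SQ}(A)$ be the number of pairs $(x,y)\in A\times A$ such that $\eta(\|x-y\|)=1$. \begin{enumerate} \item Let $d\equiv 3 \pmod 4$ and $q\equiv 3\pmod 4$. If $|A|\ge (q^{(d+1)/2}+q)/(1+q^{-(d-1)/2})$, then $$\mathcal{SQ}(A)\le \frac{|A|^2}{2} + q^{\frac{d-1}{2}} |A| -\frac{|A|^2}{2q}- \frac{|A|^2}{2 q^{\frac{d-1}{2}}} - \frac{|A|^2}{2 q^{\frac{d+1}{2}}}.$$ If $|A|\le (q^{(d+1)/2}+q)/(1+q^{-(d-1)/2})$, then $$\mathcal{SQ}(A) \le \frac{|A|^2}{2} + \frac{q^{\frac{d-1}{2}} |A|}{2} - \frac{|A|^2}{2 q^{\frac{d-1}{2}}} -\frac{|A|}{2}.$$ \item Let $d\equiv 1 \pmod 4$, or $d\equiv 3\pmod 4$ and $q\equiv 1\pmod 4$. Then $$\mathcal{SQ}(A) \le \frac{|A|^2}{2} - \frac{q^{\frac{d-1}{2}} |A|}{2} -\frac{|A|}{2}+ \min\left\{ \frac{q^{\frac{d+1}{2}} |A|}{2},~ \frac{q^{\frac{d-1}{2}} |A|}{2}+ \frac{|A|^2}{2},~\frac{|A|}{2}+ \frac{q^{\frac{d+1}{2}} |A|}{2}-\frac{|A|^2}{2q} \right\}.$$ \end{enumerate}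
   Context: For $x,y\in\mathbb F_q^d$, $\|x-y\|:=(x_1-y_1)^2+\cdots+(x_d-y_d)^2\in\mathbb F_q$. $\eta$ denotes the quadratic character of $\mathbb F_q$ (so $\eta(a)=1$ if $a$ is a nonzero square, $\eta(a)=-1$ if $a$ is a non-square) with the convention $\eta(0)=0$. *)

theory Defs
  imports "HOL-Analysis.Analysis"
begin

definition ffdist :: "'a::field ^ 'n \<Rightarrow> 'a ^ 'n \<Rightarrow> 'a" where
  "ffdist x y = (\<Sum>i\<in>UNIV. (x $ i - y $ i) ^ 2)"

definition qchar :: "'a::field \<Rightarrow> int" where
  "qchar a = (if a = 0 then 0 else if (\<exists>b. b ^ 2 = a) then 1 else -1)"

definition SQ :: "('a::field ^ 'n) set \<Rightarrow> nat" where
  "SQ A = card {(x, y). x \<in> A \<and> y \<in> A \<and> qchar (ffdist x y) = 1}"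

end

theory Submission
  imports Defs "HOL-Number_Theory.Residues" "HOL-Computational_Algebra.Polynomial"
begin

(* Put E = \<Sum>x,y\<in>A \<eta>(\<parallel>x - y\<parallel>) and Z = #{(x, y) \<in> A\<times>A. \<parallel>x - y\<parallel> = 0}; sorting the pairs
   by \<eta>(\<parallel>x - y\<parallel>) \<in> {1, 0, -1} gives 2 SQ(A) + Z = |A|\<^sup>2 + E.
   Fix a nontrivial additive character \<psi> and the Gauss sum g = \<Sum>u \<eta>(u) \<psi>(u), so g\<^sup>2 = \<eta>(-1) q.
   Writing \<eta>(c) and [c = 0] as sums of \<psi>(s c) over s, and using that the Fourier transform of
   the Gaussian \<psi>(s \<parallel>w\<parallel>) is again a Gaussian (one Gauss sum per coordinate), both E and Z
   become weighted sums of the power spectrum |F(m)|\<^sup>2, F(m) = \<Sum>x\<in>A \<psi>(m\<cdot>x).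
   For odd d and h = (d - 1)/2 this gives
     \<eta>(-1)^h q^(h+1) E = q P - q^d |A|   and   \<eta>(-1)^h q^h (q Z - |A|\<^sup>2) = Q,
   where P is the spectral mass on the cone \<parallel>m\<parallel> = 0 and Q = \<Sum>m \<eta>(\<parallel>m\<parallel>) |F(m)|\<^sup>2.
   Parseval, |F(0)|\<^sup>2 = |A|\<^sup>2 \<le> P and |Q| \<le> q^d |A| - P then bound SQ(A); the sign
   \<eta>(-1)^h, determined by d and q modulo 4, decides which bounds come out. *)

section \<open>The quadratic character of an odd finite field\<close>

lemma two_neq_zero_if_odd_card:
  assumes "odd CARD('a::{field,finite})"
  shows "(2::'a) \<noteq> 0"
proof
  assume "(2::'a) = 0"
  then have "CHAR('a) dvd 2"
    using of_nat_eq_0_iff_char_dvd[of 2, where 'a='a] by simp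
  moreover have "odd CHAR('a)"
    using CHAR_dvd_CARD assms dvd_trans by blast
  ultimately have "CHAR('a) = 1"
    by (metis prime_nat_iff two_is_prime_nat)
  then show False
    by simp
qed

lemma power_card_minus_one_eq_1:
  fixes x :: "'a::{field,finite}"
  assumes "x \<noteq> 0"
  shows "x ^ (CARD('a) - 1) = 1"
proof -
  have "(\<Prod>y\<in>UNIV-{0}. x * y) = x ^ (CARD('a) - 1) * \<Prod>(UNIV-{0})"
    by (simp add: prod.distrib card_Diff_singleton)
  moreover have "(\<Prod>y\<in>UNIV-{0}. x * y) = \<Prod>(UNIV-{0::'a})"
    by (rule prod.reindex_bij_witness[of _ "\<lambda>y. y / x" "\<lambda>y. x * y"]) (use assms in auto)
  moreover have "\<Prod>(UNIV-{0::'a}) \<noteq> 0"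
    by (simp add: prod_zero_iff)
  ultimately show ?thesis
    by (metis mult_cancel_right2)
qed

lemma card_ge_3_if_odd_card:
  assumes "odd CARD('a::{field,finite})"
  shows "CARD('a) \<ge> 3"
proof -
  have "card {0::'a, 1} \<le> CARD('a)"
    by (rule card_mono) auto
  then show ?thesis
    using assms by simp presburger
qed

lemma qchar_0 [simp]: "qchar 0 = 0"
  by (simp add: qchar_def)

lemma qchar_square [simp]: "b \<noteq> 0 \<Longrightarrow> qchar (b^2) = 1"
  by (auto simp: qchar_def)

lemma qchar_cases: "qchar u \<in> {-1, 0, 1}"
  by (simp add: qchar_def)

lemma qchar_times_self: "u \<noteq> 0 \<Longrightarrow> qchar u * qchar u = 1"
  by (simp add: qchar_def)

lemma card_square_roots:
  assumes "odd CARD('a::{field,finite})"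
  shows "int (card {x::'a. x^2 = u}) = 1 + qchar u"
proof (cases "\<exists>b. b^2 = u")
  case True
  then obtain b where b: "b^2 = u" by blast
  have "x^2 = u \<longleftrightarrow> (x - b) * (x + b) = 0" for x
    using b by (simp add: power2_eq_square algebra_simps)
  then have "{x. x^2 = u} = {b, -b}"
    by (auto simp: add_eq_0_iff2)
  moreover have "b = -b \<longleftrightarrow> b = 0"
    using two_neq_zero_if_odd_card[OF assms] by (metis add_eq_0_iff2 mult_2 mult_eq_0_iff)
  ultimately show ?thesis
    using b by (auto simp: qchar_def)
next
  case False
  then show ?thesis
    by (auto simp: qchar_def)
qed

lemma sum_square_fibres:
  fixes f :: "'a::{field,finite} \<Rightarrow> 'b::comm_ring_1"
  shows "(\<Sum>x\<in>UNIV. f (x^2)) = (\<Sum>u\<in>UNIV. of_nat (card {x::'a. x^2 = u}) * f u)"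
  by (subst sum.group[symmetric, of UNIV UNIV "\<lambda>x. x^2"]) auto

lemma sum_qchar:
  assumes "odd CARD('a::{field,finite})"
  shows "(\<Sum>u\<in>(UNIV::'a set). qchar u) = 0"
proof -
  have "(\<Sum>x\<in>(UNIV::'a set). 1) = (\<Sum>u\<in>(UNIV::'a set). 1 + qchar u)"
    using sum_square_fibres[where 'a='a and f="\<lambda>_. 1::int"] by (simp add: card_square_roots[OF assms])
  then show ?thesis
    by (simp add: sum.distrib)
qed

lemma card_nonzero_squares:
  assumes "odd CARD('a::{field,finite})"
  shows "2 * card ((\<lambda>b. b^2) ` (UNIV - {0::'a})) = CARD('a) - 1"
proof -
  have "card (UNIV - {0::'a}) = (\<Sum>u\<in>(\<lambda>b. b^2) ` (UNIV - {0::'a}). card {x\<in>UNIV - {0}. x^2 = u})"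
    using sum.image_gen[of "UNIV - {0::'a}" "\<lambda>_. 1::nat" "\<lambda>b. b^2"] by simp
  also have "\<dots> = (\<Sum>u\<in>(\<lambda>b. b^2) ` (UNIV - {0::'a}). 2)"
  proof (rule sum.cong [OF refl])
    fix u assume "u \<in> (\<lambda>b. b^2) ` (UNIV - {0::'a})"
    then obtain b where "b \<noteq> 0" "u = b^2" by blast
    moreover have "{x\<in>UNIV - {0}. x^2 = b^2} = {x. x^2 = b^2}"
      using \<open>b \<noteq> 0\<close> by auto
    ultimately show "card {x\<in>UNIV - {0}. x^2 = u} = 2"
      using card_square_roots[OF assms, of u] by simp
  qed
  finally show ?thesis
    by (simp add: card_Diff_singleton)
qed

lemma power_half_card_square:
  assumes "odd CARD('a::{field,finite})" and "b \<noteq> (0::'a)"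
  shows "(b^2) ^ ((CARD('a) - 1) div 2) = 1"
proof -
  have "2 * ((CARD('a) - 1) div 2) = CARD('a) - 1"
    using assms(1) by presburger
  then show ?thesis
    using power_card_minus_one_eq_1[OF assms(2)] by (metis power_mult)
qed

text \<open>Otherwise \<open>X^r - 1\<close>, \<open>r = (q - 1)/2\<close>, would have the \<open>r + 1\<close> roots \<open>u\<close> and the nonzero squares.\<close>
lemma power_half_card_neq_1_if_nonsquare:
  assumes odd: "odd CARD('a::{field,finite})" and nonsquare: "\<nexists>b. b^2 = u"
  shows "u ^ ((CARD('a) - 1) div 2) \<noteq> (1::'a)"
proof
  define r where "r = (CARD('a) - 1) div 2"
  assume "u ^ ((CARD('a) - 1) div 2) = 1"
  then have ur: "u ^ r = 1"
    unfolding r_def .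
  have "r \<ge> 1" "2 * r = CARD('a) - 1"
    using card_ge_3_if_odd_card[OF odd] odd unfolding r_def by presburger+
  define p :: "'a poly" where "p = Polynomial.monom 1 r - 1"
  have "poly p 0 = -1"
    using \<open>r \<ge> 1\<close> by (simp add: p_def poly_monom)
  then have p0: "p \<noteq> 0"
    by auto
  have "degree p \<le> r"
    unfolding p_def by (intro degree_diff_le) (simp_all add: degree_monom_le)
  have "poly p x = x^r - 1" for x
    by (simp add: p_def poly_monom)
  moreover have "(b^2)^r = 1" if "b \<noteq> 0" for b :: 'a
    using power_half_card_square[OF odd that] unfolding r_def .
  ultimately have roots: "insert u ((\<lambda>b. b^2) ` (UNIV - {0})) \<subseteq> {x. poly p x = 0}"
    using ur by auto
  have "card ((\<lambda>b. b^2) ` (UNIV - {0::'a})) = r"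
    using card_nonzero_squares[OF odd] \<open>2 * r = CARD('a) - 1\<close> by simp
  then have "card (insert u ((\<lambda>b. b^2) ` (UNIV - {0::'a}))) = r + 1"
    using nonsquare by (subst card_insert_disjoint) auto
  also have "\<dots> > card {x. poly p x = 0}"
    using card_poly_roots_bound[OF p0] \<open>degree p \<le> r\<close> by simp
  finally show False
    using card_mono[OF _ roots] poly_roots_finite[OF p0] by simp
qed

theorem euler_criterion:
  assumes odd: "odd CARD('a::{field,finite})" and u: "u \<noteq> (0::'a)"
  shows "u ^ ((CARD('a) - 1) div 2) = of_int (qchar u)"
proof (cases "\<exists>b. b^2 = u")
  case True
  then obtain b where "b^2 = u" by blast
  then show ?thesis
    using power_half_card_square[OF odd, of b] u by auto
next
  case nonsquare: False
  define r where "r = (CARD('a) - 1) div 2"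
  have "2 * r = CARD('a) - 1"
    using odd unfolding r_def by presburger
  then have "(u^r)^2 = 1"
    using power_card_minus_one_eq_1[OF u] by (simp flip: power_mult add: mult.commute)
  then have "(u^r - 1) * (u^r + 1) = 0"
    by (simp add: power2_eq_square algebra_simps)
  then have "u^r = 1 \<or> u^r = -1"
    by (auto simp: add_eq_0_iff2)
  then show ?thesis
    using power_half_card_neq_1_if_nonsquare[OF odd nonsquare] nonsquare u
    by (simp add: qchar_def r_def)
qed

lemma of_int_sign_eq_iff:
  assumes "odd CARD('a::{field,finite})" and "k \<in> {-1, 0, 1}" and "l \<in> {-1, 0, 1}"
  shows "(of_int k :: 'a) = of_int l \<longleftrightarrow> k = l"
proof -
  have "(1::'a) \<noteq> -1"
    using two_neq_zero_if_odd_card[OF assms(1)] by (metis add_eq_0_iff2 one_add_one)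
  then show ?thesis
    using assms(2,3) by auto
qed

lemma qchar_mult:
  assumes "odd CARD('a::{field,finite})"
  shows "qchar (u * v :: 'a) = qchar u * qchar v"
proof (cases "u = 0 \<or> v = 0")
  case False
  then have "(of_int (qchar (u * v)) :: 'a) = of_int (qchar u * qchar v)"
    by (simp add: euler_criterion[OF assms, symmetric] power_mult_distrib)
  moreover have "qchar u * qchar v \<in> {-1, 0, 1}"
    using qchar_cases[of u] qchar_cases[of v] by auto
  ultimately show ?thesis
    using of_int_sign_eq_iff[OF assms qchar_cases] by blast
qed auto

lemma qchar_minus_one:
  assumes odd: "odd CARD('a::{field,finite})"
  shows "qchar (-1::'a) = (if CARD('a) mod 4 = 1 then 1 else -1)"
proof -
  have "(of_int (qchar (-1::'a)) :: 'a) = (-1) ^ ((CARD('a) - 1) div 2)"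
    by (rule euler_criterion[OF odd, symmetric]) simp
  also have "\<dots> = of_int (if CARD('a) mod 4 = 1 then 1 else -1)"
  proof -
    have "even ((CARD('a) - 1) div 2) \<longleftrightarrow> CARD('a) mod 4 = 1"
      using odd by presburger
    then show ?thesis
      by simp
  qed
  finally show ?thesis
    by (subst (asm) of_int_sign_eq_iff[OF odd qchar_cases]) auto
qed

lemma qchar_square_mult:
  assumes "odd CARD('a::{field,finite})" and "t \<noteq> 0"
  shows "qchar (t^2 * u :: 'a) = qchar u"
  using assms by (simp add: qchar_mult)

lemma qchar_inverse:
  assumes "odd CARD('a::{field,finite})"
  shows "qchar (inverse u :: 'a) = qchar u"
proof (cases "u = 0")
  case False
  then have "inverse u = (inverse u)^2 * u"
    by (simp add: power2_eq_square)
  then show ?thesis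
    using qchar_square_mult[OF assms, of "inverse u" u] False by simp
qed simp

section \<open>A nontrivial additive character\<close>

definition one_free_subgroup :: "'a::ring_1 set \<Rightarrow> bool" where
  "one_free_subgroup H \<longleftrightarrow>
     0 \<in> H \<and> (\<forall>x\<in>H. \<forall>y\<in>H. x + y \<in> H) \<and> (\<forall>x\<in>H. -x \<in> H) \<and> 1 \<notin> H"

lemma one_free_subgroup_of_int_mult:
  assumes "one_free_subgroup H" and "h \<in> H"
  shows "of_int k * h \<in> H"
proof -
  have nat: "of_nat n * h \<in> H" for n
    using assms by (induction n) (auto simp: one_free_subgroup_def distrib_right)
  show ?thesis
  proof (cases "k \<ge> 0")
    case True
    then show ?thesis
      using nat[of "nat k"] by simp
  next
    case False
    then have "of_int k * h = - (of_nat (nat (- k)) * h)"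
      by simp
    then show ?thesis
      using nat[of "nat (- k)"] assms(1) by (simp add: one_free_subgroup_def)
  qed
qed

lemma of_int_times_power_card_minus_two:
  assumes "(of_int k :: 'a::{field,finite}) \<noteq> 0"
  shows "of_int (k ^ (CARD('a) - 2)) * (of_int k :: 'a) = 1"
proof -
  have "CARD('a) \<ge> 2"
    using card_mono[of UNIV "{0::'a, 1}"] by simp
  then have "Suc (CARD('a) - 2) = CARD('a) - 1"
    by simp
  then show ?thesis
    using power_card_minus_one_eq_1[OF assms] by (metis of_int_power power_Suc2)
qed

lemma of_int_mem_one_free_subgroup_iff:
  fixes H :: "'a::{field,finite} set"
  assumes "one_free_subgroup H"
  shows "of_int k \<in> H \<longleftrightarrow> (of_int k :: 'a) = 0"
proof
  assume "of_int k \<in> H"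
  then have "of_int (k ^ (CARD('a) - 2)) * (of_int k :: 'a) \<in> H"
    by (rule one_free_subgroup_of_int_mult[OF assms])
  then show "(of_int k :: 'a) = 0"
    using of_int_times_power_card_minus_two assms by (force simp: one_free_subgroup_def)
qed (use assms in \<open>simp add: one_free_subgroup_def\<close>)

lemma one_free_subgroup_add_multiples:
  fixes H :: "'a::ring_1 set"
  assumes H: "one_free_subgroup H" and "1 \<notin> {h + of_int j * y | h j. h \<in> H}"
  shows "one_free_subgroup {h + of_int j * y | h j. h \<in> H}" (is "one_free_subgroup ?H'")
proof -
  have mem: "h + of_int j * y \<in> ?H'" if "h \<in> H" for h j
    using that by blast
  show ?thesis
    unfolding one_free_subgroup_def
  proof (intro conjI ballI)
    show "0 \<in> ?H'"
      using mem[of 0 0] H by (simp add: one_free_subgroup_def)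
  next
    fix x z assume "x \<in> ?H'" "z \<in> ?H'"
    then obtain h1 j1 h2 j2 where "x = h1 + of_int j1 * y" "z = h2 + of_int j2 * y" "h1 \<in> H" "h2 \<in> H"
      by blast
    moreover have "h1 + h2 + of_int (j1 + j2) * y \<in> ?H'" if "h1 \<in> H" "h2 \<in> H"
      using mem[of "h1 + h2" "j1 + j2"] that H by (simp add: one_free_subgroup_def)
    ultimately show "x + z \<in> ?H'"
      by (simp add: algebra_simps)
  next
    fix x assume "x \<in> ?H'"
    then obtain h j where "x = h + of_int j * y" "h \<in> H"
      by blast
    moreover have "- h + of_int (- j) * y \<in> ?H'" if "h \<in> H"
      using mem[of "- h" "- j"] that H by (simp add: one_free_subgroup_def)
    ultimately show "- x \<in> ?H'"
      by (simp add: algebra_simps)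
  qed fact
qed

text \<open>Maximality is applied to \<open>H + \<int> y\<close>: if it contains \<open>1 = h + j y\<close>, then \<open>j\<close> is invertible
  in the prime field and \<open>y\<close> is congruent to an integer modulo \<open>H\<close>.\<close>
lemma maximal_one_free_subgroup_cosets:
  fixes H :: "'a::{field,finite} set"
  assumes H: "one_free_subgroup H"
    and maximal: "\<And>H'. one_free_subgroup H' \<Longrightarrow> H \<subseteq> H' \<Longrightarrow> H' = H"
  shows "\<exists>k. y - of_int k \<in> H"
proof (cases "1 \<in> {h + of_int j * y | h j. h \<in> H}")
  case False
  have mem: "h + of_int j * y \<in> {h + of_int j * y | h j. h \<in> H}" if "h \<in> H" for h j
    using that by blast
  then have "H \<subseteq> {h + of_int j * y | h j. h \<in> H}"
    using mem[of _ 0] by auto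
  then have "{h + of_int j * y | h j. h \<in> H} = H"
    using maximal[OF one_free_subgroup_add_multiples[OF H False]] by blast
  moreover have "y \<in> {h + of_int j * y | h j. h \<in> H}"
    using mem[of 0 1] H by (simp add: one_free_subgroup_def)
  ultimately show ?thesis
    by (intro exI[of _ 0]) simp
next
  case True
  then obtain h j where hj: "1 = h + of_int j * y" "h \<in> H"
    by blast
  then have "(of_int j :: 'a) \<noteq> 0"
    using H by (auto simp: one_free_subgroup_def)
  define u where "u = j ^ (CARD('a) - 2)"
  have "of_int u = of_int u * (h + of_int j * y)"
    using hj(1) by simp
  also have "\<dots> = of_int u * h + (of_int u * of_int j) * y"
    by (simp add: algebra_simps)
  finally have "y - of_int u = - (of_int u * h)"
    using of_int_times_power_card_minus_two[OF \<open>of_int j \<noteq> 0\<close>] unfolding u_def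
    by (simp add: algebra_simps)
  also have "\<dots> \<in> H"
    using H one_free_subgroup_of_int_mult[OF H hj(2)] by (simp add: one_free_subgroup_def)
  finally show ?thesis ..
qed

lemma exists_maximal_one_free_subgroup:
  "\<exists>H :: 'a::{ring_1,finite} set.
     one_free_subgroup H \<and> (\<forall>H'. one_free_subgroup H' \<longrightarrow> H \<subseteq> H' \<longrightarrow> H' = H)"
proof -
  have fin: "finite {H :: 'a set. one_free_subgroup H}"
    by simp
  have "{0} \<in> {H :: 'a set. one_free_subgroup H}"
    by (simp add: one_free_subgroup_def)
  then obtain H where "H \<in> {H :: 'a set. one_free_subgroup H}"
    and "\<forall>H' \<in> {H :: 'a set. one_free_subgroup H}. H \<subseteq> H' \<longrightarrow> H = H'"
    using finite_has_maximal[OF fin] by blast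
  then show ?thesis
    by auto
qed

lemma cis_two_pi_div_cong:
  assumes "int p dvd k - l"
  shows "cis (2 * pi * k / p) = cis (2 * pi * l / p)"
proof (cases "p = 0")
  case False
  obtain m where "k = l + int p * m"
    using assms by (metis add_diff_cancel_left' diff_add_cancel dvd_def)
  then have "2 * pi * k / p = 2 * pi * l / p + 2 * pi * m"
    using False by (simp add: field_simps)
  then show ?thesis
    by (simp flip: cis_mult)
qed simp

lemma cis_two_pi_div_neq_1:
  fixes p :: nat
  assumes "p \<ge> 2"
  shows "cis (2 * pi / p) \<noteq> 1"
proof
  assume "cis (2 * pi / p) = 1"
  then have "cos (2 * pi / p) = 1"
    by (metis cis.sel(1) one_complex.sel(1))
  then obtain n :: int where "2 * pi / p = real_of_int n * 2 * pi"
    using cos_one_2pi_int by blast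
  then have "real_of_int (int p * n) = 1"
    using assms by (simp add: field_simps)
  then have "int p * n = 1"
    by linarith
  then show False
    using assms pos_zmult_eq_1_iff[of "int p" n] by simp
qed

lemma cis_of_one_free_subgroup_cong:
  fixes H :: "'a::{field,finite} set"
  assumes "one_free_subgroup H" and "y - of_int k \<in> H" and "y - of_int l \<in> H"
  shows "cis (2 * pi * k / CHAR('a)) = cis (2 * pi * l / CHAR('a))"
proof -
  have "(y - of_int l) + - (y - of_int k) \<in> H"
    using assms unfolding one_free_subgroup_def by blast
  then have "(of_int (k - l) :: 'a) \<in> H"
    by (simp add: algebra_simps)
  then have "(of_int (k - l) :: 'a) = 0"
    using of_int_mem_one_free_subgroup_iff[OF assms(1)] by blast
  then have "int CHAR('a) dvd k - l"
    by (simp only: of_int_eq_0_iff_char_dvd)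
  then show ?thesis
    by (rule cis_two_pi_div_cong)
qed

text \<open>A maximal subgroup \<open>H\<close> avoiding \<open>1\<close> is a complement of the prime field, so \<open>y \<mapsto> k\<close>
  for \<open>y \<in> of_int k + H\<close> is a well-defined homomorphism onto \<open>\<int>/p\<close>.\<close>
theorem additive_character_exists:
  "\<exists>psi :: 'a::{field,finite} \<Rightarrow> complex.
     (\<forall>a b. psi (a + b) = psi a * psi b) \<and> (\<forall>a. norm (psi a) = 1) \<and> psi 1 \<noteq> 1"
proof -
  obtain H :: "'a set" where H: "one_free_subgroup H"
    and maximal: "\<And>H'. one_free_subgroup H' \<Longrightarrow> H \<subseteq> H' \<Longrightarrow> H' = H"
    using exists_maximal_one_free_subgroup by blast
  define index where "index y = (SOME k. y - of_int k \<in> H)" for y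
  have index: "y - of_int (index y) \<in> H" for y
    unfolding index_def using maximal_one_free_subgroup_cosets[OF H maximal] by (rule someI_ex)
  define psi where "psi y = cis (2 * pi * index y / CHAR('a))" for y
  have psi_eq: "psi y = cis (2 * pi * k / CHAR('a))" if "y - of_int k \<in> H" for y k
    unfolding psi_def using cis_of_one_free_subgroup_cong[OF H index that] .
  have add: "psi (a + b) = psi a * psi b" for a b
  proof -
    have "(a + b) - of_int (index a + index b) = (a - of_int (index a)) + (b - of_int (index b))"
      by simp
    also have "\<dots> \<in> H"
      using H index unfolding one_free_subgroup_def by blast
    finally have "psi (a + b) = cis (2 * pi * (index a + index b) / CHAR('a))"
      by (rule psi_eq)
    then show ?thesis
      by (simp add: psi_def cis_mult add_divide_distrib distrib_left)
  qed
  have "CHAR('a) > 0"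
    by (rule finite_imp_CHAR_pos) simp
  then have "CHAR('a) \<ge> 2"
    using CHAR_not_1[where 'a='a] by linarith
  then have "psi 1 \<noteq> 1"
    using psi_eq[of 1 1] H cis_two_pi_div_neq_1 by (simp add: one_free_subgroup_def)
  with add show ?thesis
    by (intro exI[of _ psi]) (simp add: psi_def)
qed

section \<open>Gauss sums\<close>

definition chi :: "'a::field \<Rightarrow> complex" where
  "chi u = of_int (qchar u)"

locale additive_character =
  fixes psi :: "'a::{field,finite} \<Rightarrow> complex"
  assumes psi_add: "psi (a + b) = psi a * psi b"
    and norm_psi: "norm (psi a) = 1"
    and psi_1_neq_1: "psi 1 \<noteq> 1"
begin

definition gauss_sum :: complex where
  "gauss_sum = (\<Sum>u\<in>UNIV. chi u * psi u)"

lemma psi_0 [simp]: "psi 0 = 1"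
proof -
  have "psi 0 * psi 0 = psi 0 * 1" "psi 0 \<noteq> 0"
    using psi_add[of 0 0] norm_psi[of 0] by auto
  then show ?thesis
    by (metis mult_left_cancel)
qed

lemma psi_minus: "psi (- a) = cnj (psi a)"
proof -
  have "psi a * psi (- a) = psi a * cnj (psi a)"
    using psi_add[of a "- a"] complex_norm_square[of "psi a"] norm_psi[of a] by simp
  moreover have "psi a \<noteq> 0"
    using norm_psi[of a] by auto
  ultimately show ?thesis
    by simp
qed

lemma psi_diff: "psi (a - b) = psi a * cnj (psi b)"
  using psi_add[of a "- b"] psi_minus[of b] by simp

lemma psi_sum: "psi (sum f S) = (\<Prod>i\<in>S. psi (f i))"
  by (induction S rule: infinite_finite_induct) (auto simp: psi_add)

lemma sum_psi_mult: "(\<Sum>t\<in>UNIV. psi (a * t)) = (if a = 0 then of_nat CARD('a) else 0)"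
proof (cases "a = 0")
  case False
  have "(\<Sum>t\<in>UNIV. psi (a * t)) = (\<Sum>t\<in>UNIV. psi t)"
    by (rule sum.reindex_bij_witness[of _ "\<lambda>t. t / a" "\<lambda>t. a * t"]) (use False in auto)
  moreover have "psi 1 * (\<Sum>t\<in>UNIV. psi t) = (\<Sum>t\<in>UNIV. psi t)"
  proof -
    have "psi 1 * (\<Sum>t\<in>UNIV. psi t) = (\<Sum>t\<in>UNIV. psi (1 + t))"
      by (simp add: sum_distrib_left psi_add)
    also have "\<dots> = (\<Sum>t\<in>UNIV. psi t)"
      by (rule sum.reindex_bij_witness[of _ "\<lambda>t. t - 1" "\<lambda>t. 1 + t"]) auto
    finally show ?thesis .
  qed
  ultimately show ?thesis
    using False psi_1_neq_1 by auto
qed simp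

lemma sum_psi_mult': "(\<Sum>t\<in>UNIV. psi (t * a)) = (if a = 0 then of_nat CARD('a) else 0)"
  using sum_psi_mult[of a] by (simp add: mult.commute)

end

locale odd_additive_character = additive_character psi for psi :: "'a::{field,finite} \<Rightarrow> complex" +
  assumes odd_card: "odd CARD('a)"
begin

lemma two_neq_0: "(2::'a) \<noteq> 0"
  by (rule two_neq_zero_if_odd_card[OF odd_card])

lemma four_neq_0: "(4::'a) \<noteq> 0"
  using two_neq_0 mult_eq_0_iff[of "2::'a" 2] by simp

lemma chi_mult: "chi (u * v :: 'a) = chi u * chi v"
  by (simp add: chi_def qchar_mult[OF odd_card])

lemma chi_0 [simp]: "chi (0::'a) = 0"
  by (simp add: chi_def)

lemma chi_1 [simp]: "chi (1::'a) = 1"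
  using qchar_square[of "1::'a"] by (simp add: chi_def)

lemma chi_inverse: "chi (inverse u :: 'a) = chi u"
  by (simp add: chi_def qchar_inverse[OF odd_card])

lemma chi_square_mult: "t \<noteq> 0 \<Longrightarrow> chi (t^2 * u :: 'a) = chi u"
  by (simp add: chi_def qchar_square_mult[OF odd_card])

lemma chi_times_self: "u \<noteq> (0::'a) \<Longrightarrow> chi u * chi u = 1"
  unfolding chi_def using qchar_times_self[of u] by (metis of_int_1 of_int_mult)

lemma chi_minus: "chi (- u :: 'a) = chi (-1::'a) * chi u"
  using chi_mult[of "-1" u] by simp

lemma sum_chi: "(\<Sum>u\<in>UNIV. chi (u::'a)) = 0"
  using sum_qchar[OF odd_card] unfolding chi_def by (metis of_int_0 of_int_sum)

lemma sum_chi_psi_mult: "(\<Sum>s\<in>UNIV. chi s * psi (s * c)) = chi c * gauss_sum"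
proof (cases "c = 0")
  case False
  have "(\<Sum>s\<in>UNIV. chi s * psi (s * c)) = (\<Sum>u\<in>UNIV. chi (u * inverse c) * psi u)"
    by (rule sum.reindex_bij_witness[of _ "\<lambda>u. u * inverse c" "\<lambda>s. s * c"])
      (use False in \<open>auto simp: mult.assoc\<close>)
  also have "\<dots> = (\<Sum>u\<in>UNIV. chi c * (chi u * psi u))"
    by (simp add: chi_mult chi_inverse mult_ac)
  finally show ?thesis
    by (simp add: gauss_sum_def sum_distrib_left)
qed (simp add: sum_chi flip: sum_distrib_right)

lemma sum_psi_square_mult:
  assumes "c \<noteq> 0"
  shows "(\<Sum>t\<in>UNIV. psi (c * t^2)) = chi c * gauss_sum"
proof -
  have "(\<Sum>t\<in>UNIV. psi (c * t^2)) = (\<Sum>u\<in>UNIV. of_nat (card {x::'a. x^2 = u}) * psi (c * u))"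
    by (rule sum_square_fibres)
  also have "\<dots> = (\<Sum>u\<in>UNIV. psi (c * u) + chi u * psi (u * c))"
  proof (rule sum.cong [OF refl])
    fix u :: 'a
    have "(of_nat (card {x::'a. x^2 = u}) :: complex) = of_int (int (card {x::'a. x^2 = u}))"
      by simp
    also have "\<dots> = 1 + chi u"
      by (simp add: card_square_roots[OF odd_card] chi_def)
    finally show "of_nat (card {x::'a. x^2 = u}) * psi (c * u) = psi (c * u) + chi u * psi (u * c)"
      by (simp add: algebra_simps)
  qed
  also have "\<dots> = chi c * gauss_sum"
    using assms by (simp add: sum.distrib sum_psi_mult sum_chi_psi_mult)
  finally show ?thesis .
qed

text \<open>The substitution \<open>(x, y) \<mapsto> (x + y, x - y)\<close>, invertible since \<open>2 \<noteq> 0\<close>, turns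
  \<open>\<Sum> psi(x\<^sup>2 - y\<^sup>2)\<close> into \<open>\<Sum> psi(a b) = q\<close>.\<close>
lemma gauss_sum_square: "gauss_sum * gauss_sum = chi (-1::'a) * of_nat CARD('a)"
proof -
  have "gauss_sum * (chi (-1::'a) * gauss_sum) = (\<Sum>x\<in>UNIV. psi (x^2)) * (\<Sum>y\<in>UNIV. psi (- (y^2)))"
    using sum_psi_square_mult[of 1] sum_psi_square_mult[of "-1"] by simp
  also have "\<dots> = (\<Sum>x\<in>UNIV. \<Sum>y\<in>UNIV. psi ((x + y) * (x - y)))"
    by (simp add: sum_product psi_add[symmetric] algebra_simps power2_eq_square)
  also have "\<dots> = (\<Sum>(x, y)\<in>UNIV. psi ((x + y) * (x - y)))"
    by (simp add: sum.cartesian_product)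
  also have "\<dots> = (\<Sum>(a, b)\<in>UNIV. psi (a * b))"
    by (rule sum.reindex_bij_witness[of _ "\<lambda>(a, b). ((a + b) / 2, (a - b) / 2)" "\<lambda>(x, y). (x + y, x - y)"])
      (use two_neq_0 four_neq_0 in \<open>auto simp: field_simps\<close>)
  also have "\<dots> = (\<Sum>a\<in>UNIV. \<Sum>b\<in>UNIV. psi (a * b))"
    by (simp add: sum.cartesian_product)
  also have "\<dots> = of_nat CARD('a)"
    by (simp add: sum_psi_mult)
  finally have "chi (-1::'a) * (gauss_sum * (chi (-1::'a) * gauss_sum)) = chi (-1::'a) * of_nat CARD('a)"
    by simp
  then show ?thesis
    using chi_times_self[of "-1"] by (simp add: mult_ac)
qed

lemma gauss_sum_neq_0: "gauss_sum \<noteq> 0"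
  using gauss_sum_square chi_times_self[of "-1"] by auto

end

section \<open>Fourier analysis on \<open>\<bbbF>\<^sub>q\<^sup>d\<close>\<close>

definition dotp :: "'a::field ^ 'n \<Rightarrow> 'a ^ 'n \<Rightarrow> 'a" where
  "dotp m v = (\<Sum>i\<in>UNIV. m $ i * v $ i)"

definition sqnorm :: "'a::field ^ 'n \<Rightarrow> 'a" where
  "sqnorm v = (\<Sum>i\<in>UNIV. (v $ i)^2)"

lemma ffdist_eq_sqnorm: "ffdist x y = sqnorm (x - y)"
  by (simp add: ffdist_def sqnorm_def)

lemma dotp_diff_right: "dotp m (x - y) = dotp m x - dotp m y"
  by (simp add: dotp_def sum_subtractf right_diff_distrib)

lemma sum_vec_prod:
  fixes f :: "'n::finite \<Rightarrow> 'a::finite \<Rightarrow> 'c::comm_semiring_1"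
  shows "(\<Sum>m\<in>(UNIV :: ('a ^ 'n) set). \<Prod>i\<in>UNIV. f i (m $ i)) = (\<Prod>i\<in>UNIV. \<Sum>t\<in>UNIV. f i t)"
proof -
  have "(\<Prod>i\<in>UNIV. \<Sum>t\<in>UNIV. f i t) = (\<Sum>h\<in>UNIV. \<Prod>i\<in>UNIV. f i (h i))"
    using prod_sum_PiE[of UNIV "\<lambda>_. UNIV" f] by simp
  also have "\<dots> = (\<Sum>m\<in>(UNIV :: ('a ^ 'n) set). \<Prod>i\<in>UNIV. f i (m $ i))"
    by (rule sum.reindex_bij_witness[of _ vec_nth vec_lambda]) auto
  finally show ?thesis
    by simp
qed

context additive_character
begin

definition fourier :: "('a ^ 'n) set \<Rightarrow> 'a ^ 'n \<Rightarrow> complex" where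
  "fourier A m = (\<Sum>x\<in>A. psi (dotp m x))"

definition power_spectrum :: "('a ^ 'n) set \<Rightarrow> 'a ^ 'n \<Rightarrow> real" where
  "power_spectrum A m = (cmod (fourier A m))^2"

lemma power_spectrum_nonneg: "power_spectrum A m \<ge> 0"
  by (simp add: power_spectrum_def)

lemma power_spectrum_0: "power_spectrum A 0 = (real (card A))^2"
  by (simp add: power_spectrum_def fourier_def dotp_def)

lemma sum_psi_dotp:
  "(\<Sum>m\<in>UNIV. psi (dotp m w)) = (if w = 0 then of_nat CARD('a) ^ CARD('n) else 0)"
  for w :: "'a ^ 'n"
proof -
  have "(\<Sum>m\<in>UNIV. psi (dotp m w)) = (\<Sum>m\<in>(UNIV :: ('a ^ 'n) set). \<Prod>i\<in>UNIV. psi (w $ i * m $ i))"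
    by (simp add: dotp_def psi_sum mult.commute)
  also have "\<dots> = (\<Prod>i\<in>UNIV. \<Sum>t\<in>UNIV. psi (w $ i * t))"
    by (rule sum_vec_prod)
  also have "\<dots> = (\<Prod>i\<in>UNIV. if w $ i = 0 then of_nat CARD('a) else 0)"
    by (simp add: sum_psi_mult)
  also have "\<dots> = (if w = 0 then of_nat CARD('a) ^ CARD('n) else 0)"
    by (auto simp: vec_eq_iff)
  finally show ?thesis .
qed

lemma sum_pairs_psi_dotp:
  "(\<Sum>x\<in>A. \<Sum>y\<in>A. psi (dotp m (x - y))) = of_real (power_spectrum A m)"
proof -
  have "(\<Sum>x\<in>A. \<Sum>y\<in>A. psi (dotp m (x - y))) = fourier A m * cnj (fourier A m)"
    by (simp add: dotp_diff_right psi_diff fourier_def sum_product)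
  then show ?thesis
    unfolding power_spectrum_def complex_norm_square .
qed

theorem parseval:
  "(\<Sum>m\<in>UNIV. power_spectrum A m) = real CARD('a) ^ CARD('n) * real (card A)"
  for A :: "('a ^ 'n) set"
proof -
  have "of_real (\<Sum>m\<in>UNIV. power_spectrum A m) = (\<Sum>m\<in>UNIV. \<Sum>x\<in>A. \<Sum>y\<in>A. psi (dotp m (x - y)))"
    by (simp add: sum_pairs_psi_dotp)
  also have "\<dots> = (\<Sum>x\<in>A. \<Sum>y\<in>A. \<Sum>m\<in>UNIV. psi (dotp m (x - y)))"
    by (simp add: sum.swap[where A = UNIV])
  also have "\<dots> = of_real (real CARD('a) ^ CARD('n) * real (card A))"
    by (simp add: sum_psi_dotp)
  finally show ?thesis
    by (simp only: of_real_eq_iff)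
qed

lemma sum_psi_mult_inverse:
  "(\<Sum>s\<in>UNIV - {0}. psi (c * inverse s)) = (if c = 0 then of_nat CARD('a) else 0) - 1"
proof -
  have "(\<Sum>s\<in>UNIV - {0}. psi (c * inverse s)) = (\<Sum>u\<in>UNIV - {0}. psi (c * u))"
    by (rule sum.reindex_bij_witness[of _ inverse inverse]) auto
  also have "\<dots> = (\<Sum>u\<in>UNIV. psi (c * u)) - 1"
    by (simp add: sum_diff1)
  finally show ?thesis
    by (simp add: sum_psi_mult)
qed

definition null_energy :: "('a ^ 'n) set \<Rightarrow> real" where
  "null_energy A = (\<Sum>m\<in>{m. sqnorm m = 0}. power_spectrum A m)"

definition twisted_energy :: "('a ^ 'n) set \<Rightarrow> real" where
  "twisted_energy A = (\<Sum>m\<in>UNIV. of_int (qchar (sqnorm m)) * power_spectrum A m)"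

lemma null_energy_eq_sum_if:
  "null_energy A = (\<Sum>m\<in>UNIV. if sqnorm m = 0 then power_spectrum A m else 0)"
  unfolding null_energy_def by (simp add: sum.inter_filter[symmetric])

lemma card_square_le_null_energy: "(real (card A))^2 \<le> null_energy A"
proof -
  have "power_spectrum A 0 \<le> null_energy A"
    unfolding null_energy_def
    by (rule member_le_sum) (auto simp: sqnorm_def power_spectrum_nonneg)
  then show ?thesis
    by (simp add: power_spectrum_0)
qed

lemma abs_twisted_energy_le:
  "\<bar>twisted_energy A\<bar> \<le> real CARD('a) ^ CARD('n) * real (card A) - null_energy A"
  for A :: "('a ^ 'n) set"
proof -
  have "\<bar>twisted_energy A\<bar> \<le> (\<Sum>m\<in>UNIV. \<bar>of_int (qchar (sqnorm m)) * power_spectrum A m\<bar>)"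
    unfolding twisted_energy_def by (rule sum_abs)
  also have "\<dots> \<le> (\<Sum>m\<in>UNIV. power_spectrum A m - (if sqnorm m = 0 then power_spectrum A m else 0))"
    by (intro sum_mono) (auto simp: qchar_def abs_mult power_spectrum_nonneg)
  also have "\<dots> = real CARD('a) ^ CARD('n) * real (card A) - null_energy A"
    by (simp add: sum_subtractf parseval null_energy_eq_sum_if)
  finally show ?thesis .
qed

end

section \<open>Pair sums and the power spectrum\<close>

definition qchar_pair_sum :: "('a::field ^ 'n) set \<Rightarrow> int" where
  "qchar_pair_sum A = (\<Sum>x\<in>A. \<Sum>y\<in>A. qchar (ffdist x y))"

definition isotropic_pairs :: "('a::field ^ 'n) set \<Rightarrow> nat" where
  "isotropic_pairs A = card {(x, y). x \<in> A \<and> y \<in> A \<and> ffdist x y = 0}"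

lemma card_pairs_eq_sum:
  assumes "finite A"
  shows "card {(x, y). x \<in> A \<and> y \<in> A \<and> R x y} = (\<Sum>x\<in>A. \<Sum>y\<in>A. if R x y then 1 else 0)"
proof -
  have "{(x, y). x \<in> A \<and> y \<in> A \<and> R x y} = {p \<in> A \<times> A. R (fst p) (snd p)}"
    by auto
  then have "card {(x, y). x \<in> A \<and> y \<in> A \<and> R x y} = (\<Sum>p\<in>A \<times> A. if R (fst p) (snd p) then 1 else 0)"
    using assms by (simp add: sum.inter_filter[symmetric])
  then show ?thesis
    by (simp add: sum.cartesian_product split_def)
qed

lemma SQ_plus_isotropic_pairs:
  fixes A :: "('a::field ^ 'n) set"
  assumes "finite A"
  shows "2 * int (SQ A) + int (isotropic_pairs A) = int (card A)^2 + qchar_pair_sum A"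
proof -
  have "2 * int (if qchar c = 1 then 1 else 0) + int (if c = 0 then 1 else 0) = 1 + qchar c" for c :: 'a
    by (simp add: qchar_def)
  moreover have "2 * int (SQ A) + int (isotropic_pairs A)
      = (\<Sum>x\<in>A. \<Sum>y\<in>A. 2 * int (if qchar (ffdist x y) = 1 then 1 else 0)
                         + int (if ffdist x y = 0 then 1 else 0))"
    unfolding SQ_def isotropic_pairs_def card_pairs_eq_sum[OF assms]
    by (simp add: of_nat_sum sum_distrib_left sum.distrib)
  ultimately show ?thesis
    by (simp add: sum.distrib qchar_pair_sum_def power2_eq_square)
qed

lemma card_le_isotropic_pairs:
  fixes A :: "('a::field ^ 'n) set"
  assumes "finite A"
  shows "card A \<le> isotropic_pairs A"
proof -
  have "card A = card ((\<lambda>x. (x, x)) ` A)"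
    by (simp add: card_image inj_on_def)
  also have "\<dots> \<le> isotropic_pairs A"
    unfolding isotropic_pairs_def using assms
    by (intro card_mono) (auto simp: ffdist_def intro: finite_subset[of _ "A \<times> A"])
  finally show ?thesis .
qed

lemma SQ_plus_card_le:
  fixes A :: "('a::field ^ 'n) set"
  assumes "finite A"
  shows "SQ A + card A \<le> card A ^ 2"
proof -
  have "{(x, y). x \<in> A \<and> y \<in> A \<and> qchar (ffdist x y) = 1} \<subseteq> A \<times> A - (\<lambda>x. (x, x)) ` A"
    by (auto simp: ffdist_def)
  then have "SQ A \<le> card (A \<times> A - (\<lambda>x. (x, x)) ` A)"
    unfolding SQ_def using assms by (intro card_mono) auto
  also have "\<dots> = card A ^ 2 - card A"
    using assms by (subst card_Diff_subset) (auto simp: card_image inj_on_def card_cartesian_product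
        power2_eq_square)
  moreover have "card A \<le> card A ^ 2"
    by (cases "card A") (simp_all add: power2_eq_square)
  ultimately show ?thesis
    by linarith
qed

lemma divide_four_mult: "c / (4 * s) = c / 4 * inverse (s::'a::field)"
  by (cases "s = 0") (simp_all add: field_simps)

context odd_additive_character
begin

lemma sum_chi_psi_mult_inverse:
  "(\<Sum>s\<in>UNIV - {0}. chi (- s) * psi (c * inverse s)) = chi (-1::'a) * chi c * gauss_sum"
proof -
  have "(\<Sum>s\<in>UNIV - {0}. chi (- s) * psi (c * inverse s)) = (\<Sum>u\<in>UNIV - {0}. chi (- inverse u) * psi (c * u))"
    by (rule sum.reindex_bij_witness[of _ inverse inverse]) auto
  also have "\<dots> = chi (-1::'a) * (\<Sum>u\<in>UNIV - {0}. chi u * psi (u * c))"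
    by (simp add: sum_distrib_left chi_minus[of "inverse _"] chi_inverse mult_ac)
  also have "(\<Sum>u\<in>UNIV - {0}. chi u * psi (u * c)) = (\<Sum>u\<in>UNIV. chi u * psi (u * c))"
    by (rule sum.mono_neutral_left) auto
  finally show ?thesis
    by (simp add: sum_chi_psi_mult mult.assoc)
qed

lemma sum_psi_quadratic:
  assumes "s \<noteq> 0"
  shows "(\<Sum>t\<in>UNIV. psi (t * b - t^2 / (4 * s))) = psi (s * b^2) * (chi (- s) * gauss_sum)"
proof -
  define c where "c = - inverse (4 * s)"
  have complete_square: "t * b - t^2 / (4 * s) = c * (t - 2 * s * b)^2 + s * b^2" for t
    unfolding c_def using assms four_neq_0 by (simp add: field_simps power2_eq_square)
  have "(\<Sum>t\<in>UNIV. psi (t * b - t^2 / (4 * s))) = (\<Sum>t\<in>UNIV. psi (c * (t - 2 * s * b)^2)) * psi (s * b^2)"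
    by (simp add: complete_square psi_add sum_distrib_right)
  also have "(\<Sum>t\<in>UNIV. psi (c * (t - 2 * s * b)^2)) = (\<Sum>t\<in>UNIV. psi (c * t^2))"
    by (rule sum.reindex_bij_witness[of _ "\<lambda>t. t + 2 * s * b" "\<lambda>t. t - 2 * s * b"]) auto
  also have "\<dots> = chi c * gauss_sum"
    using assms four_neq_0 by (intro sum_psi_square_mult) (simp add: c_def)
  also have "c = (inverse (2 * s))^2 * (- s)"
    unfolding c_def using assms two_neq_0 by (simp add: field_simps power2_eq_square)
  also have "chi \<dots> = chi (- s)"
    using assms two_neq_0 by (intro chi_square_mult) simp
  finally show ?thesis
    by (simp add: mult_ac)
qed

lemma fourier_psi_sqnorm:
  fixes w :: "'a ^ 'n"
  assumes "s \<noteq> 0"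
  shows "(chi (- s) * gauss_sum) ^ CARD('n) * psi (s * sqnorm w)
       = (\<Sum>m\<in>UNIV. psi (- sqnorm m / (4 * s)) * psi (dotp m w))"
proof -
  have "dotp m w - sqnorm m / (4 * s) = (\<Sum>i\<in>UNIV. m $ i * w $ i - (m $ i)^2 / (4 * s))" for m :: "'a ^ 'n"
    by (simp add: sqnorm_def dotp_def sum_subtractf sum_divide_distrib)
  then have "(\<Sum>m\<in>UNIV. psi (- sqnorm m / (4 * s)) * psi (dotp m w))
      = (\<Sum>m\<in>(UNIV :: ('a ^ 'n) set). \<Prod>i\<in>UNIV. psi (m $ i * w $ i - (m $ i)^2 / (4 * s)))"
    by (simp add: psi_add[symmetric] psi_sum)
  also have "\<dots> = (\<Prod>i\<in>UNIV. \<Sum>t\<in>UNIV. psi (t * w $ i - t^2 / (4 * s)))"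
    by (rule sum_vec_prod)
  also have "\<dots> = (\<Prod>i\<in>(UNIV :: 'n set). psi (s * (w $ i)^2) * (chi (- s) * gauss_sum))"
    using assms by (simp add: sum_psi_quadratic)
  also have "\<dots> = (chi (- s) * gauss_sum) ^ CARD('n) * psi (s * sqnorm w)"
    by (simp add: prod.distrib sqnorm_def sum_distrib_left psi_sum mult.commute)
  finally show ?thesis
    by simp
qed

lemma chi_power_odd:
  assumes "odd k" and "u \<noteq> (0::'a)"
  shows "chi u ^ k = chi u"
proof -
  obtain j where "k = 2 * j + 1"
    using assms(1) oddE by blast
  then have "chi u ^ k = (chi u * chi u) ^ j * chi u"
    by (simp add: power_mult power2_eq_square)
  then show ?thesis
    using chi_times_self[OF assms(2)] by simp
qed

lemma sum_pairs_psi_sqnorm: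
  fixes A :: "('a ^ 'n) set"
  assumes "odd CARD('n)" and "s \<noteq> 0"
  shows "gauss_sum ^ CARD('n) * (\<Sum>x\<in>A. \<Sum>y\<in>A. psi (s * sqnorm (x - y)))
       = chi (- s) * (\<Sum>m\<in>UNIV. psi (- sqnorm m / (4 * s)) * of_real (power_spectrum A m))"
    (is "?G * ?K = chi (- s) * ?M")
proof -
  have "chi (- s) * ?G = (chi (- s) * gauss_sum) ^ CARD('n)"
    using chi_power_odd[OF assms(1), of "- s"] assms(2) by (simp add: power_mult_distrib)
  then have "chi (- s) * (?G * ?K)
      = (\<Sum>x\<in>A. \<Sum>y\<in>A. (chi (- s) * gauss_sum) ^ CARD('n) * psi (s * sqnorm (x - y)))"
    by (simp add: sum_distrib_left mult.assoc[symmetric])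
  also have "\<dots> = (\<Sum>x\<in>A. \<Sum>y\<in>A. \<Sum>m\<in>UNIV. psi (- sqnorm m / (4 * s)) * psi (dotp m (x - y)))"
    by (simp only: fourier_psi_sqnorm[OF assms(2)])
  also have "\<dots> = ?M"
    by (simp add: sum_distrib_left sum.swap[where A = UNIV] sum_pairs_psi_dotp[symmetric])
  finally have "chi (- s) * (chi (- s) * (?G * ?K)) = chi (- s) * ?M"
    by simp
  then show ?thesis
    using chi_times_self[of "- s"] assms(2) by (simp add: mult.assoc[symmetric])
qed

lemma chi_minus_one_mult_chi_quarter: "chi (-1::'a) * chi (- c / 4) = chi (c::'a)"
proof -
  have "- c / 4 = (inverse 2)^2 * (- c)"
    by (simp add: field_simps power2_eq_square)
  then have "chi (- c / 4) = chi ((inverse 2)^2 * (- c))"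
    by (rule arg_cong)
  also have "\<dots> = chi (- c)"
    using two_neq_0 by (intro chi_square_mult) simp
  finally show ?thesis
    using chi_times_self[of "-1"] by (simp add: chi_minus[of c] mult.assoc[symmetric])
qed

lemma sum_nonzero_spectral_swap:
  "(\<Sum>s\<in>UNIV - {0}. w s * (\<Sum>m\<in>UNIV. psi (- sqnorm m / (4 * s)) * of_real (power_spectrum A m)))
   = (\<Sum>m\<in>UNIV. (\<Sum>s\<in>UNIV - {0}. w s * psi ((- sqnorm m / 4) * inverse s))
                  * of_real (power_spectrum A m))"
proof -
  have "(\<Sum>s\<in>UNIV - {0}. w s * (\<Sum>m\<in>UNIV. psi (- sqnorm m / (4 * s)) * of_real (power_spectrum A m)))
      = (\<Sum>m\<in>UNIV. \<Sum>s\<in>UNIV - {0}. w s * psi (- sqnorm m / (4 * s)) * of_real (power_spectrum A m))"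
    by (simp add: sum_distrib_left mult.assoc sum.swap[where B = UNIV])
  then show ?thesis
    by (simp only: sum_distrib_right[symmetric] divide_four_mult)
qed

text \<open>Writing \<open>\<eta>(c) = g\<inverse> \<Sum>s \<eta>(s) \<psi>(s c)\<close> (below also \<open>[c = 0] = q\<inverse> \<Sum>s \<psi>(s c)\<close>) turns a pair
  sum into sums of \<open>\<psi>(s \<parallel>x - y\<parallel>)\<close>; for \<open>s \<noteq> 0\<close> these are Fourier transformed by
  \<open>sum_pairs_psi_sqnorm\<close>, after which the sum over \<open>s\<close> is evaluated first.\<close>
lemma gauss_sum_power_qchar_pairs:
  fixes A :: "('a ^ 'n) set"
  assumes "odd CARD('n)"
  shows "gauss_sum ^ (CARD('n) + 1) * (\<Sum>x\<in>A. \<Sum>y\<in>A. chi (sqnorm (x - y)))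
       = chi (-1::'a) * (\<Sum>m\<in>UNIV. ((if sqnorm m = 0 then of_nat CARD('a) else 0) - 1) * of_real (power_spectrum A m))"
proof -
  define K where "K s = (\<Sum>x\<in>A. \<Sum>y\<in>A. psi (s * sqnorm (x - y)))" for s
  define M where "M s = (\<Sum>m\<in>UNIV. psi (- sqnorm m / (4 * s)) * of_real (power_spectrum A m))" for s
  have "gauss_sum * (\<Sum>x\<in>A. \<Sum>y\<in>A. chi (sqnorm (x - y)))
      = (\<Sum>x\<in>A. \<Sum>y\<in>A. \<Sum>s\<in>UNIV. chi s * psi (s * sqnorm (x - y)))"
    by (simp add: sum_chi_psi_mult sum_distrib_left mult.commute)
  also have "\<dots> = (\<Sum>s\<in>UNIV. chi s * K s)"
    unfolding K_def by (simp add: sum_distrib_left sum.swap[where B = UNIV])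
  finally have "gauss_sum ^ (CARD('n) + 1) * (\<Sum>x\<in>A. \<Sum>y\<in>A. chi (sqnorm (x - y)))
      = gauss_sum ^ CARD('n) * (\<Sum>s\<in>UNIV. chi s * K s)"
    by (simp add: mult_ac)
  also have "\<dots> = (\<Sum>s\<in>UNIV. chi s * (gauss_sum ^ CARD('n) * K s))"
    by (simp add: sum_distrib_left mult_ac)
  also have "\<dots> = (\<Sum>s\<in>UNIV - {0}. chi (-1::'a) * M s)"
  proof (rule sum.mono_neutral_cong_right)
    fix s :: 'a
    assume "s \<in> UNIV - {0}"
    then have "gauss_sum ^ CARD('n) * K s = chi (- s) * M s"
      unfolding K_def M_def by (simp add: sum_pairs_psi_sqnorm[OF assms])
    then have "chi s * (gauss_sum ^ CARD('n) * K s) = (chi s * chi s) * chi (-1::'a) * M s"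
      by (simp add: chi_minus[of s] mult_ac)
    also have "\<dots> = chi (-1::'a) * M s"
      using \<open>s \<in> UNIV - {0}\<close> chi_times_self[of s] by simp
    finally show "chi s * (gauss_sum ^ CARD('n) * K s) = chi (-1::'a) * M s" .
  qed auto
  also have "\<dots> = (\<Sum>m\<in>UNIV. (\<Sum>s\<in>UNIV - {0}. chi (-1::'a) * psi ((- sqnorm m / 4) * inverse s))
                              * of_real (power_spectrum A m))"
    unfolding M_def by (rule sum_nonzero_spectral_swap)
  finally show ?thesis
    unfolding sum_distrib_left[symmetric] sum_psi_mult_inverse using four_neq_0
    by (simp add: sum_distrib_left mult.assoc)
qed

lemma gauss_sum_power_isotropic_pairs:
  fixes A :: "('a ^ 'n) set"
  assumes "odd CARD('n)"
  shows "gauss_sum ^ CARD('n)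
         * (of_nat CARD('a) * (\<Sum>x\<in>A. \<Sum>y\<in>A. if sqnorm (x - y) = 0 then 1 else 0) - of_nat (card A)^2)
       = gauss_sum * (\<Sum>m\<in>UNIV. chi (sqnorm m) * of_real (power_spectrum A m))"
proof -
  define K where "K s = (\<Sum>x\<in>A. \<Sum>y\<in>A. psi (s * sqnorm (x - y)))" for s
  have "of_nat CARD('a) * (\<Sum>x\<in>A. \<Sum>y\<in>A. if sqnorm (x - y) = 0 then 1 else 0)
      = (\<Sum>x\<in>A. \<Sum>y\<in>A. \<Sum>s\<in>UNIV. psi (s * sqnorm (x - y)))"
    by (simp add: sum_psi_mult' sum_distrib_left if_distrib cong: if_cong)
  also have "\<dots> = (\<Sum>s\<in>UNIV. K s)"
    unfolding K_def by (simp add: sum.swap[where B = UNIV])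
  also have "\<dots> = of_nat (card A)^2 + (\<Sum>s\<in>UNIV - {0}. K s)"
    by (simp add: sum.remove[of UNIV 0] K_def power2_eq_square)
  finally have "gauss_sum ^ CARD('n)
         * (of_nat CARD('a) * (\<Sum>x\<in>A. \<Sum>y\<in>A. if sqnorm (x - y) = 0 then 1 else 0) - of_nat (card A)^2)
      = (\<Sum>s\<in>UNIV - {0}. gauss_sum ^ CARD('n) * K s)"
    by (simp add: sum_distrib_left)
  also have "\<dots> = (\<Sum>s\<in>UNIV - {0}. chi (- s)
                      * (\<Sum>m\<in>UNIV. psi (- sqnorm m / (4 * s)) * of_real (power_spectrum A m)))"
    unfolding K_def by (intro sum.cong refl) (simp add: sum_pairs_psi_sqnorm[OF assms])
  also have "\<dots> = (\<Sum>m\<in>UNIV. (\<Sum>s\<in>UNIV - {0}. chi (- s) * psi ((- sqnorm m / 4) * inverse s))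
                              * of_real (power_spectrum A m))"
    by (rule sum_nonzero_spectral_swap)
  also have "\<dots> = (\<Sum>m\<in>UNIV. chi (-1::'a) * chi (- sqnorm m / 4) * gauss_sum * of_real (power_spectrum A m))"
    by (simp only: sum_chi_psi_mult_inverse)
  also have "\<dots> = gauss_sum * (\<Sum>m\<in>UNIV. chi (sqnorm m) * of_real (power_spectrum A m))"
    unfolding chi_minus_one_mult_chi_quarter by (simp add: sum_distrib_left mult_ac)
  finally show ?thesis .
qed

lemma gauss_sum_power_odd:
  assumes "odd k"
  shows "gauss_sum ^ k = gauss_sum * of_real ((of_int (qchar (-1::'a)) * real CARD('a)) ^ (k div 2))"
proof -
  obtain j where k: "k = Suc (2 * j)"
    using assms oddE by fastforce
  then have "gauss_sum ^ k = gauss_sum * (gauss_sum * gauss_sum) ^ (k div 2)"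
    by (simp add: power_mult power2_eq_square)
  then show ?thesis
    by (simp add: gauss_sum_square chi_def)
qed

lemma qchar_minus_one_times_self: "real_of_int (qchar (-1::'a)) * of_int (qchar (-1::'a)) = 1"
  using qchar_times_self[of "-1::'a"] by (simp flip: of_int_mult)

lemma qchar_pair_sum_spectral:
  fixes A :: "('a ^ 'n) set"
  assumes "odd CARD('n)"
  shows "of_int (qchar (-1::'a)) ^ (CARD('n) div 2) * real CARD('a) ^ (CARD('n) div 2 + 1)
           * of_int (qchar_pair_sum A)
       = real CARD('a) * null_energy A - real CARD('a) ^ CARD('n) * real (card A)"
    (is "?e ^ ?h * ?q ^ (?h + 1) * ?E = ?R")
proof -
  have G: "gauss_sum ^ (CARD('n) + 1) = of_real ((?e * ?q) ^ (?h + 1))"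
    using gauss_sum_power_odd[OF assms] gauss_sum_square
    by (simp add: chi_def power_Suc2 mult_ac)
  have E: "(\<Sum>x\<in>A. \<Sum>y\<in>A. chi (sqnorm (x - y))) = of_real ?E"
    by (simp add: qchar_pair_sum_def chi_def ffdist_eq_sqnorm)
  have "(\<Sum>m\<in>UNIV. ((if sqnorm m = 0 then of_nat CARD('a) else 0) - 1) * of_real (power_spectrum A m))
      = of_real (\<Sum>m\<in>UNIV. ?q * (if sqnorm m = 0 then power_spectrum A m else 0) - power_spectrum A m)"
    unfolding of_real_sum by (intro sum.cong) (simp_all add: algebra_simps)
  also have "(\<Sum>m\<in>UNIV. ?q * (if sqnorm m = 0 then power_spectrum A m else 0) - power_spectrum A m) = ?R"
    by (simp add: null_energy_eq_sum_if sum_distrib_left sum_subtractf parseval)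
  finally have R: "(\<Sum>m\<in>UNIV. ((if sqnorm m = 0 then of_nat CARD('a) else 0) - 1) * of_real (power_spectrum A m))
      = of_real ?R" .
  have "of_real ((?e * ?q) ^ (?h + 1)) * of_real ?E = chi (-1::'a) * of_real ?R"
    using gauss_sum_power_qchar_pairs[OF assms, of A] unfolding G E R .
  then have "of_real ((?e * ?q) ^ (?h + 1) * ?E) = (of_real (?e * ?R) :: complex)"
    unfolding of_real_mult chi_def of_real_of_int_eq .
  then have "(?e * ?q) ^ (?h + 1) * ?E = ?e * ?R"
    by (simp only: of_real_eq_iff)
  then have "(?e * ?e) * (?e ^ ?h * ?q ^ (?h + 1) * ?E) = (?e * ?e) * ?R"
    by (simp add: power_mult_distrib mult_ac)
  then show ?thesis
    by (simp only: qchar_minus_one_times_self mult_1)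
qed

lemma isotropic_pairs_spectral:
  fixes A :: "('a ^ 'n) set"
  assumes "odd CARD('n)"
  shows "of_int (qchar (-1::'a)) ^ (CARD('n) div 2) * real CARD('a) ^ (CARD('n) div 2)
           * (real CARD('a) * real (isotropic_pairs A) - (real (card A))^2)
       = twisted_energy A"
proof -
  define X where "X = (of_int (qchar (-1::'a)) * real CARD('a)) ^ (CARD('n) div 2)"
  have G: "gauss_sum ^ CARD('n) = gauss_sum * of_real X"
    unfolding X_def by (rule gauss_sum_power_odd[OF assms])
  have Z: "(\<Sum>x\<in>A. \<Sum>y\<in>A. if sqnorm (x - y) = 0 then 1 else 0) = (of_real (real (isotropic_pairs A)) :: complex)"
    by (simp add: isotropic_pairs_def card_pairs_eq_sum ffdist_eq_sqnorm of_nat_sum)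
      (auto intro!: sum.cong)
  have Q: "(\<Sum>m\<in>UNIV. chi (sqnorm m) * of_real (power_spectrum A m)) = of_real (twisted_energy A)"
    by (simp add: twisted_energy_def chi_def)
  have "gauss_sum * of_real X * (of_nat CARD('a) * of_real (real (isotropic_pairs A)) - of_nat (card A)^2)
      = gauss_sum * of_real (twisted_energy A)"
    using gauss_sum_power_isotropic_pairs[OF assms, of A] unfolding G Z Q .
  also have "gauss_sum * of_real X * (of_nat CARD('a) * of_real (real (isotropic_pairs A)) - of_nat (card A)^2)
      = gauss_sum * of_real (X * (real CARD('a) * real (isotropic_pairs A) - (real (card A))^2))"
    by simp
  finally have "of_real (X * (real CARD('a) * real (isotropic_pairs A) - (real (card A))^2))
      = (of_real (twisted_energy A) :: complex)"
    by (simp only: mult_left_cancel[OF gauss_sum_neq_0])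
  then have "X * (real CARD('a) * real (isotropic_pairs A) - (real (card A))^2) = twisted_energy A"
    by (simp only: of_real_eq_iff)
  then show ?thesis
    by (simp add: X_def power_mult_distrib)
qed

end

lemma pair_count_constraints:
  fixes A :: "('a::{field,finite} ^ 'n) set"
  assumes "odd CARD('a)" and "odd CARD('n)"
  defines "q \<equiv> real CARD('a)" and "u \<equiv> real CARD('a) ^ ((CARD('n) - 1) div 2)"
    and "e \<equiv> real_of_int (qchar (-1::'a)) ^ ((CARD('n) - 1) div 2)"
    and "N \<equiv> real (card A)" and "S \<equiv> real (SQ A)"
    and "E \<equiv> real_of_int (qchar_pair_sum A)" and "Z \<equiv> real (isotropic_pairs A)"
  obtains P Q where "N^2 \<le> P" and "\<bar>Q\<bar> \<le> q * u^2 * N - P"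
    and "e * (q * u * E) = q * P - q * u^2 * N" and "e * (u * (q * Z - N^2)) = Q"
    and "2 * S + Z = N^2 + E" and "N \<le> Z" and "S + N \<le> N^2"
proof -
  obtain psi :: "'a \<Rightarrow> complex" where "odd_additive_character psi"
    using additive_character_exists[where 'a='a] assms(1)
    by (auto simp: odd_additive_character_def odd_additive_character_axioms_def additive_character_def)
  then interpret odd_additive_character psi .
  have half: "(CARD('n) - 1) div 2 = CARD('n) div 2"
    using assms(2) by presburger
  have "q ^ CARD('n) = q ^ (CARD('n) div 2 * 2 + 1)"
    using odd_two_times_div_two_succ[OF assms(2)] by (simp add: mult.commute)
  then have powers: "q ^ CARD('n) = q * u^2" "q ^ (CARD('n) div 2 + 1) = q * u"
    unfolding u_def half q_def by (simp_all add: power_mult)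
  have "real_of_int (2 * int (SQ A) + int (isotropic_pairs A)) = of_int (int (card A)^2 + qchar_pair_sum A)"
    using SQ_plus_isotropic_pairs[of A] by simp
  then have "2 * S + Z = N^2 + E"
    unfolding S_def Z_def N_def E_def by simp
  moreover have "N \<le> Z"
    using card_le_isotropic_pairs[of A] unfolding N_def Z_def by simp
  moreover have "real (SQ A + card A) \<le> real (card A ^ 2)"
    using SQ_plus_card_le[OF finite, of A] by (simp only: of_nat_le_iff)
  then have "S + N \<le> N^2"
    unfolding S_def N_def by simp
  ultimately show ?thesis
    using that[of "null_energy A" "twisted_energy A"] card_square_le_null_energy[of A]
      abs_twisted_energy_le[of A] qchar_pair_sum_spectral[OF assms(2), of A]
      isotropic_pairs_spectral[OF assms(2), of A]
    unfolding e_def half powers[unfolded q_def u_def half] N_def q_def u_def E_def Z_def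
    by (simp add: mult_ac)
qed

text \<open>Multiplying \<open>2 S + Z = N\<^sup>2 + E\<close> by \<open>q u\<close> leaves only \<open>P\<close> and \<open>Q\<close>, which are
  controlled by \<open>N\<^sup>2 \<le> P\<close> and \<open>\<bar>Q\<bar> \<le> q u\<^sup>2 N - P\<close>.\<close>
lemma pair_count_bounds_neg_sign:
  fixes q u N S E Z P Q :: real
  assumes "q \<ge> 1" and "u > 0" and "N^2 \<le> P" and "\<bar>Q\<bar> \<le> q * u^2 * N - P"
    and "- (q * u * E) = q * P - q * u^2 * N" and "- (u * (q * Z - N^2)) = Q"
    and "2 * S + Z = N^2 + E" and "N \<le> Z"
  shows "S \<le> N^2/2 + u*N - N^2/(2*q) - N^2/(2*u) - N^2/(2*(q*u))"
    and "S \<le> N^2/2 + u*N/2 - N^2/(2*u) - N/2"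
proof -
  have "q > 0"
    using assms(1) by simp
  have "2 * S = N^2 + E - Z"
    using assms(7) by linarith
  then have "q * u * (2 * S) = q * u * (N^2 + E - Z)"
    by simp
  moreover have "q * u * Z \<ge> u * N^2 - q * u^2 * N + P"
    using assms(4,6) by (simp add: algebra_simps)
  moreover have "q * N^2 \<le> q * P"
    using assms(1,3) by (intro mult_left_mono) auto
  ultimately have "2 * S * (q * u) \<le> q * u * N^2 - u * N^2 + 2 * (q * u^2 * N) - q * N^2 - N^2"
    using assms(3,5) by (simp add: algebra_simps)
  then have "2 * S \<le> (q * u * N^2 - u * N^2 + 2 * (q * u^2 * N) - q * N^2 - N^2) / (q * u)"
    using \<open>q > 0\<close> assms(2) by (simp add: pos_le_divide_eq)
  also have "\<dots> = 2 * (N^2/2 + u*N - N^2/(2*q) - N^2/(2*u) - N^2/(2*(q*u)))"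
    using \<open>q > 0\<close> assms(2) by (simp add: field_simps power2_eq_square)
  finally show "S \<le> N^2/2 + u*N - N^2/(2*q) - N^2/(2*u) - N^2/(2*(q*u))"
    by simp
  have "q * (u * E) = q * (u^2 * N - P)"
    using assms(5) by (simp add: algebra_simps)
  then have "u * E = u^2 * N - P"
    using \<open>q > 0\<close> by simp
  then have "E = u * N - P / u"
    using assms(2) by (simp add: field_simps power2_eq_square)
  moreover have "N^2 / u \<le> P / u"
    using assms(2,3) by (simp add: divide_right_mono)
  ultimately have "E \<le> u * N - N^2 / u"
    by simp
  then show "S \<le> N^2/2 + u*N/2 - N^2/(2*u) - N/2"
    using assms(7,8) by (simp add: field_simps)
qed

lemma pair_count_bounds_pos_sign:
  fixes q u N S E Z P Q :: real
  assumes "q \<ge> 1" and "u > 0" and "N^2 \<le> P" and "\<bar>Q\<bar> \<le> q * u^2 * N - P"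
    and "q * u * E = q * P - q * u^2 * N" and "u * (q * Z - N^2) = Q"
    and "2 * S + Z = N^2 + E" and "N \<le> Z" and "S + N \<le> N^2" and "N \<ge> 0"
  shows "S \<le> N^2/2 - u*N/2 - N/2
             + Min {q*u*N/2, u*N/2 + N^2/2, N/2 + q*u*N/2 - N^2/(2*q)}"
proof -
  have "q > 0"
    using assms(1) by simp
  have "P \<le> q * u^2 * N"
    using assms(4) by linarith
  then have "q * u * E \<le> q * u * (q * u * N - u * N)"
    using assms(5) \<open>q > 0\<close> by (simp add: algebra_simps power2_eq_square)
  then have "E \<le> q * u * N - u * N"
    using \<open>q > 0\<close> assms(2) by simp
  then have bound1: "S \<le> N^2/2 - u*N/2 - N/2 + q*u*N/2"
    using assms(7,8) by simp
  have bound2: "S \<le> N^2/2 - u*N/2 - N/2 + (u*N/2 + N^2/2)"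
    using assms(9,10) by simp
  have "2 * S = N^2 + E - Z"
    using assms(7) by linarith
  then have "q * u * (2 * S) = q * u * (N^2 + E - Z)"
    by simp
  moreover have "q * u * Z \<ge> u * N^2 - q * u^2 * N + P"
    using assms(4,6) by (simp add: algebra_simps)
  moreover have "q * P - P \<le> q * (q * u^2 * N) - q * u^2 * N"
    using mult_left_mono[OF \<open>P \<le> q * u^2 * N\<close>, of "q - 1"] assms(1) by (simp add: algebra_simps)
  ultimately have "2 * S * (q * u) \<le> q * u * N^2 - u * N^2 + q * (q * u^2 * N) - q * u^2 * N"
    using assms(5) by (simp add: algebra_simps)
  then have "2 * S \<le> (q * u * N^2 - u * N^2 + q * (q * u^2 * N) - q * u^2 * N) / (q * u)"
    using \<open>q > 0\<close> assms(2) by (simp add: pos_le_divide_eq)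
  also have "\<dots> = 2 * (N^2/2 - u*N/2 - N/2 + (N/2 + q*u*N/2 - N^2/(2*q)))"
    using \<open>q > 0\<close> assms(2) by (simp add: field_simps power2_eq_square)
  finally have bound3: "S \<le> N^2/2 - u*N/2 - N/2 + (N/2 + q*u*N/2 - N^2/(2*q))"
    by simp
  have "Min {q*u*N/2, u*N/2 + N^2/2, N/2 + q*u*N/2 - N^2/(2*q)}
      \<in> {q*u*N/2, u*N/2 + N^2/2, N/2 + q*u*N/2 - N^2/(2*q)}"
    by (rule Min_in) auto
  then show ?thesis
    using bound1 bound2 bound3 by auto
qed

lemma SQ_bounds_odd_dimension:
  fixes A :: "('a::{field,finite} ^ 'n) set"
  assumes "odd CARD('a)"
  defines "q \<equiv> real CARD('a)" and "d \<equiv> CARD('n)" and "N \<equiv> real (card A)"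
  assumes "odd d"
  shows "qchar (-1::'a) ^ ((d - 1) div 2) = -1 \<Longrightarrow>
           real (SQ A) \<le> N^2 / 2 + q ^ ((d - 1) div 2) * N - N^2 / (2 * q)
             - N^2 / (2 * q ^ ((d - 1) div 2)) - N^2 / (2 * q ^ ((d + 1) div 2)) \<and>
           real (SQ A) \<le> N^2 / 2 + q ^ ((d - 1) div 2) * N / 2
             - N^2 / (2 * q ^ ((d - 1) div 2)) - N / 2" (is "_ \<Longrightarrow> ?neg")
    and "qchar (-1::'a) ^ ((d - 1) div 2) = 1 \<Longrightarrow>
           real (SQ A) \<le> N^2 / 2 - q ^ ((d - 1) div 2) * N / 2 - N / 2
             + Min {q ^ ((d + 1) div 2) * N / 2, q ^ ((d - 1) div 2) * N / 2 + N^2 / 2,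
                    N / 2 + q ^ ((d + 1) div 2) * N / 2 - N^2 / (2 * q)}" (is "_ \<Longrightarrow> ?pos")
proof -
  define u where "u = q ^ ((d - 1) div 2)"
  define e where "e = real_of_int (qchar (-1::'a)) ^ ((d - 1) div 2)"
  have "q \<ge> 1" "u > 0" "N \<ge> 0"
    unfolding q_def u_def N_def by simp_all
  have "(d + 1) div 2 = Suc ((d - 1) div 2)"
    using assms(5) by presburger
  then have qu: "q ^ ((d + 1) div 2) = q * u"
    unfolding u_def by simp
  obtain P Q where bounds: "N^2 \<le> P" "\<bar>Q\<bar> \<le> q * u^2 * N - P"
    and spectral: "e * (q * u * of_int (qchar_pair_sum A)) = q * P - q * u^2 * N"
      "e * (u * (q * real (isotropic_pairs A) - N^2)) = Q"
    and counts: "2 * real (SQ A) + real (isotropic_pairs A) = N^2 + of_int (qchar_pair_sum A)"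
      "N \<le> real (isotropic_pairs A)" "real (SQ A) + N \<le> N^2"
    using pair_count_constraints[OF assms(1) assms(5)[unfolded d_def], of A]
    unfolding q_def u_def N_def e_def d_def .
  show "qchar (-1::'a) ^ ((d - 1) div 2) = -1 \<Longrightarrow> ?neg"
    using pair_count_bounds_neg_sign[OF \<open>q \<ge> 1\<close> \<open>u > 0\<close> bounds _ _ counts(1,2)] spectral
    unfolding qu u_def[symmetric] e_def by (simp flip: of_int_power)
  show "qchar (-1::'a) ^ ((d - 1) div 2) = 1 \<Longrightarrow> ?pos"
    using pair_count_bounds_pos_sign[OF \<open>q \<ge> 1\<close> \<open>u > 0\<close> bounds _ _ counts \<open>N \<ge> 0\<close>] spectral
    unfolding qu u_def[symmetric] e_def by (simp flip: of_int_power)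
qed

lemma qchar_minus_one_power_half:
  assumes "odd CARD('a::{field,finite})" and "odd d"
  shows "qchar (-1::'a) ^ ((d - 1) div 2) = (if d mod 4 = 3 \<and> CARD('a) mod 4 = 3 then -1 else 1)"
proof (cases "d mod 4 = 1")
  case True
  then have "even ((d - 1) div 2)"
    by presburger
  then show ?thesis
    using True qchar_minus_one[OF assms(1)] by (simp add: neg_one_even_power)
next
  case False
  then have "d mod 4 = 3" "odd ((d - 1) div 2)"
    using assms(2) by presburger+
  moreover have "CARD('a) mod 4 = 1 \<or> CARD('a) mod 4 = 3"
    using assms(1) by presburger
  ultimately show ?thesis
    using qchar_minus_one[OF assms(1)] by (auto simp: neg_one_odd_power)
qed

theorem theorem1p4:
  fixes A :: "('a::{field, finite} ^ 'n) set"
  assumes "odd CARD('a)"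
  defines "q \<equiv> real CARD('a)" and "d \<equiv> CARD('n)" and "N \<equiv> real (card A)"
  shows
   "(d mod 4 = 3 \<and> CARD('a) mod 4 = 3 \<longrightarrow>
      (N \<ge> (q ^ ((d + 1) div 2) + q) / (1 + 1 / q ^ ((d - 1) div 2)) \<longrightarrow>
        real (SQ A) \<le> N^2 / 2 + q ^ ((d - 1) div 2) * N - N^2 / (2 * q)
           - N^2 / (2 * q ^ ((d - 1) div 2)) - N^2 / (2 * q ^ ((d + 1) div 2))) \<and>
      (N \<le> (q ^ ((d + 1) div 2) + q) / (1 + 1 / q ^ ((d - 1) div 2)) \<longrightarrow>
        real (SQ A) \<le> N^2 / 2 + q ^ ((d - 1) div 2) * N / 2
           - N^2 / (2 * q ^ ((d - 1) div 2)) - N / 2))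
    \<and>
    (d mod 4 = 1 \<or> (d mod 4 = 3 \<and> CARD('a) mod 4 = 1) \<longrightarrow>
      real (SQ A) \<le> N^2 / 2 - q ^ ((d - 1) div 2) * N / 2 - N / 2
        + Min {q ^ ((d + 1) div 2) * N / 2,
               q ^ ((d - 1) div 2) * N / 2 + N^2 / 2,
               N / 2 + q ^ ((d + 1) div 2) * N / 2 - N^2 / (2 * q)})"
proof -
  have "odd d \<and> qchar (-1::'a) ^ ((d - 1) div 2) = -1" if "d mod 4 = 3 \<and> CARD('a) mod 4 = 3"
  proof -
    have "odd d"
      using that by presburger
    then show ?thesis
      using that qchar_minus_one_power_half[OF assms(1)] by simp
  qed
  moreover have "odd d \<and> qchar (-1::'a) ^ ((d - 1) div 2) = 1"
    if "d mod 4 = 1 \<or> (d mod 4 = 3 \<and> CARD('a) mod 4 = 1)"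
  proof -
    have "odd d" "\<not> (d mod 4 = 3 \<and> CARD('a) mod 4 = 3)"
      using that by presburger+
    then show ?thesis
      using qchar_minus_one_power_half[OF assms(1)] by simp
  qed
  ultimately show ?thesis
    using SQ_bounds_odd_dimension[OF assms(1), of A, folded q_def d_def N_def] by blast
qed

end
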